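(* Let $M$ be a real $N\times N$ matrix all of whose column sums $\sum_{i}M_{i,j}$ are equal, and let $\Gamma(M)=\max_j\sum_{i=1}^N|M_{i,j}|$. Then every decomposition $M=\sum_a c_a S_a$ with finitely many stochastic matrices $S_a$ and real coefficients $c_a$ satisfies $\sum_a|c_a|\ge\Gamma(M)$, and there exists such a decomposition with $\sum_a|c_a|=\Gamma(M)$.
   Context: A stochastic matrix is a real square matrix with nonnegative entries whose columns each sum to $1$. *)

theory Defs
  imports "HOL-Analysis.Analysis"
begin

text \<open>Matrices are real N x N matrices of type real^'n^'n; entry (i,j) is M $ i $ j
  (row i, column j). A stochastic matrix has nonnegative entries and column sums 1.\<close>

definition stochastic :: "real^'n^'n \<Rightarrow> bool" where
  "stochastic S \<longleftrightarrow> (\<forall>i j. S $ i $ j \<ge> 0) \<and> (\<forall>j. (\<Sum>i\<in>UNIV. S $ i $ j) = 1)"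

definition Gamma :: "real^'n^'n \<Rightarrow> real" where
  "Gamma M = (MAX j\<in>UNIV. (\<Sum>i\<in>UNIV. \<bar>M $ i $ j\<bar>))"

end

theory Submission
  imports Defs
begin

text \<open>Lower bound: for a column j realising Gamma M, the triangle inequality gives
  Gamma M \<le> sum over a of |c a| times the j-th column sum of S a, which is sum over a of |c a|.

  Upper bound: let s be the common column sum and g j the absolute sum of column j.
  The positive and negative parts of M have j-th column sums (g j + s)/2 and (g j - s)/2.
  Adding the same deficit (Gamma M - g j)/2 to one entry of column j of both parts makes
  all their column sums (Gamma M + s)/2 and (Gamma M - s)/2, without changing their
  difference M. Normalising gives M = (Gamma M + s)/2 P - (Gamma M - s)/2 Q with P, Q
  stochastic, and both coefficients are nonnegative because |s| \<le> Gamma M, so their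
  absolute values add up to Gamma M.\<close>

lemma column_abs_sum_le_Gamma: "(\<Sum>i\<in>UNIV. \<bar>M $ i $ j\<bar>) \<le> Gamma M"
  unfolding Gamma_def by (rule Max_ge) auto

lemma abs_column_sum_le_Gamma: "\<bar>\<Sum>i\<in>UNIV. M $ i $ j\<bar> \<le> Gamma M"
  by (rule order_trans[OF sum_abs column_abs_sum_le_Gamma])

lemma Gamma_attained:
  obtains j where "Gamma M = (\<Sum>i\<in>UNIV. \<bar>M $ i $ j\<bar>)"
proof -
  have "Gamma M \<in> (\<lambda>j. \<Sum>i\<in>UNIV. \<bar>M $ i $ j\<bar>) ` UNIV"
    unfolding Gamma_def by (rule Max_in) auto
  then show ?thesis using that by blast
qed

lemma stochastic_mat_1: "stochastic (mat 1)"
  unfolding stochastic_def by (simp add: mat_def)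

lemma Gamma_le_sum_abs_coeffs:
  fixes S :: "'a \<Rightarrow> real^'n^'n"
  assumes stoch: "\<And>a. a \<in> A \<Longrightarrow> stochastic (S a)"
  shows "Gamma (\<Sum>a\<in>A. c a *\<^sub>R S a) \<le> (\<Sum>a\<in>A. \<bar>c a\<bar>)"
proof -
  have nonneg: "S a $ i $ j \<ge> 0" and colsum: "(\<Sum>i\<in>UNIV. S a $ i $ j) = 1"
    if "a \<in> A" for a i j
    using stoch[OF that] unfolding stochastic_def by auto
  obtain j where "Gamma (\<Sum>a\<in>A. c a *\<^sub>R S a) = (\<Sum>i\<in>UNIV. \<bar>(\<Sum>a\<in>A. c a *\<^sub>R S a) $ i $ j\<bar>)"
    by (rule Gamma_attained)
  also have "\<dots> = (\<Sum>i\<in>UNIV. \<bar>\<Sum>a\<in>A. c a * S a $ i $ j\<bar>)"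
    by simp
  also have "\<dots> \<le> (\<Sum>i\<in>UNIV. \<Sum>a\<in>A. \<bar>c a\<bar> * S a $ i $ j)"
  proof (rule sum_mono)
    fix i
    have "\<bar>\<Sum>a\<in>A. c a * S a $ i $ j\<bar> \<le> (\<Sum>a\<in>A. \<bar>c a * S a $ i $ j\<bar>)"
      by (rule sum_abs)
    also have "\<dots> = (\<Sum>a\<in>A. \<bar>c a\<bar> * S a $ i $ j)"
      using nonneg by (intro sum.cong) (auto simp: abs_mult)
    finally show "\<bar>\<Sum>a\<in>A. c a * S a $ i $ j\<bar> \<le> (\<Sum>a\<in>A. \<bar>c a\<bar> * S a $ i $ j)" .
  qed
  also have "\<dots> = (\<Sum>a\<in>A. \<bar>c a\<bar> * (\<Sum>i\<in>UNIV. S a $ i $ j))"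
    by (subst sum.swap) (simp add: sum_distrib_left)
  also have "\<dots> = (\<Sum>a\<in>A. \<bar>c a\<bar>)"
    using colsum by simp
  finally show ?thesis .
qed

lemma nonneg_const_column_sums_imp_scaleR_stochastic:
  fixes A :: "real^'n^'n"
  assumes nonneg: "\<And>i j. A $ i $ j \<ge> 0" and colsum: "\<And>j. (\<Sum>i\<in>UNIV. A $ i $ j) = c"
  obtains S where "stochastic S" "A = c *\<^sub>R S"
proof (cases "c = 0")
  case True
  have "A $ i $ j = 0" for i j
    using colsum[of j] True nonneg sum_nonneg_eq_0_iff[of UNIV "\<lambda>i. A $ i $ j"] by auto
  then have "A = c *\<^sub>R mat 1"
    using True by (simp add: vec_eq_iff)
  then show ?thesis using that stochastic_mat_1 by blast
next
  case False
  have "c > 0"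
    using False colsum[of undefined] nonneg sum_nonneg[of UNIV "\<lambda>i. A $ i $ undefined"] by force
  then have "stochastic ((1 / c) *\<^sub>R A)" and "A = c *\<^sub>R ((1 / c) *\<^sub>R A)"
    using nonneg colsum by (auto simp: stochastic_def sum_divide_distrib[symmetric])
  then show ?thesis using that by blast
qed

lemma sum_max_0_eq:
  fixes f :: "'a \<Rightarrow> real"
  shows "(\<Sum>i\<in>I. max (f i) 0) = ((\<Sum>i\<in>I. \<bar>f i\<bar>) + (\<Sum>i\<in>I. f i)) / 2"
proof -
  have "(\<Sum>i\<in>I. max (f i) 0) = (\<Sum>i\<in>I. (\<bar>f i\<bar> + f i) / 2)"
    by (intro sum.cong) (auto simp: max_def)
  then show ?thesis by (simp add: sum_divide_distrib[symmetric] sum.distrib)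
qed

lemma two_stochastic_decomposition:
  fixes M :: "real^'n^'n"
  assumes colsum: "\<And>j. (\<Sum>i\<in>UNIV. M $ i $ j) = s"
  obtains P Q where "stochastic P" "stochastic Q"
    "M = ((Gamma M + s) / 2) *\<^sub>R P - ((Gamma M - s) / 2) *\<^sub>R Q"
proof -
  define i0 :: 'n where "i0 = undefined"
  define pad :: "real^'n^'n" where
    "pad = (\<chi> i j. if i = i0 then (Gamma M - (\<Sum>k\<in>UNIV. \<bar>M $ k $ j\<bar>)) / 2 else 0)"
  define P' :: "real^'n^'n" where "P' = (\<chi> i j. max (M $ i $ j) 0) + pad"
  define Q' :: "real^'n^'n" where "Q' = (\<chi> i j. max (- M $ i $ j) 0) + pad"
  have pad_nonneg: "pad $ i $ j \<ge> 0" for i j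
    using column_abs_sum_le_Gamma[of M j] unfolding pad_def by auto
  have pad_colsum: "(\<Sum>i\<in>UNIV. pad $ i $ j) = (Gamma M - (\<Sum>k\<in>UNIV. \<bar>M $ k $ j\<bar>)) / 2" for j
    unfolding pad_def by simp
  have "(\<Sum>i\<in>UNIV. P' $ i $ j) = (Gamma M + s) / 2" for j
    using sum_max_0_eq[of "\<lambda>i. M $ i $ j" UNIV] colsum[of j] pad_colsum[of j]
    by (simp add: P'_def sum.distrib field_simps)
  moreover have "(\<Sum>i\<in>UNIV. Q' $ i $ j) = (Gamma M - s) / 2" for j
    using sum_max_0_eq[of "\<lambda>i. - M $ i $ j" UNIV] colsum[of j] pad_colsum[of j]
    by (simp add: Q'_def sum.distrib sum_negf field_simps)
  moreover have "P' $ i $ j \<ge> 0" "Q' $ i $ j \<ge> 0" for i j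
    using pad_nonneg[of i j] by (simp_all add: P'_def Q'_def)
  ultimately obtain P Q where P: "stochastic P" "P' = ((Gamma M + s) / 2) *\<^sub>R P"
    and Q: "stochastic Q" "Q' = ((Gamma M - s) / 2) *\<^sub>R Q"
    using nonneg_const_column_sums_imp_scaleR_stochastic by metis
  have "M = P' - Q'"
    unfolding P'_def Q'_def by (simp add: vec_eq_iff max_def)
  also have "\<dots> = ((Gamma M + s) / 2) *\<^sub>R P - ((Gamma M - s) / 2) *\<^sub>R Q"
    using P(2) Q(2) by simp
  finally show ?thesis using that P(1) Q(1) by blast
qed

theorem mainTheorem4:
  fixes M :: "real^'n^'n"
  assumes "\<forall>j k. (\<Sum>i\<in>UNIV. M $ i $ j) = (\<Sum>i\<in>UNIV. M $ i $ k)"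
  shows "(\<forall>(m::nat) (c::nat \<Rightarrow> real) (S::nat \<Rightarrow> real^'n^'n).
            (\<forall>a<m. stochastic (S a)) \<and> M = (\<Sum>a<m. c a *\<^sub>R S a)
            \<longrightarrow> (\<Sum>a<m. \<bar>c a\<bar>) \<ge> Gamma M)
       \<and> (\<exists>(m::nat) (c::nat \<Rightarrow> real) (S::nat \<Rightarrow> real^'n^'n).
            (\<forall>a<m. stochastic (S a)) \<and> M = (\<Sum>a<m. c a *\<^sub>R S a)
            \<and> (\<Sum>a<m. \<bar>c a\<bar>) = Gamma M)"
proof (intro conjI allI impI)
  fix m c and S :: "nat \<Rightarrow> real^'n^'n"
  assume "(\<forall>a<m. stochastic (S a)) \<and> M = (\<Sum>a<m. c a *\<^sub>R S a)"
  then show "(\<Sum>a<m. \<bar>c a\<bar>) \<ge> Gamma M"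
    using Gamma_le_sum_abs_coeffs[of "{..<m}" S c] by auto
next
  define s where "s = (\<Sum>i\<in>UNIV. M $ i $ undefined)"
  have colsum: "(\<Sum>i\<in>UNIV. M $ i $ j) = s" for j
    using assms unfolding s_def by blast
  obtain P Q where PQ: "stochastic P" "stochastic Q"
    "M = ((Gamma M + s) / 2) *\<^sub>R P - ((Gamma M - s) / 2) *\<^sub>R Q"
    using two_stochastic_decomposition colsum by blast
  define c :: "nat \<Rightarrow> real" where "c a = (if a = 0 then (Gamma M + s) / 2 else - ((Gamma M - s) / 2))" for a
  define S where "S a = (if a = 0 then P else Q)" for a :: nat
  have two: "{..<2::nat} = {0, 1}" by auto
  have "\<bar>s\<bar> \<le> Gamma M"
    using abs_column_sum_le_Gamma colsum by metis
  then have "(\<Sum>a<2. \<bar>c a\<bar>) = Gamma M"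
    unfolding two c_def by (simp add: field_simps)
  moreover have "M = (\<Sum>a<2. c a *\<^sub>R S a)"
  proof -
    have "(\<Sum>a<2. c a *\<^sub>R S a) = ((Gamma M + s) / 2) *\<^sub>R P - ((Gamma M - s) / 2) *\<^sub>R Q"
      unfolding two c_def S_def by simp
    then show ?thesis using PQ(3) by (rule trans[rotated, OF sym])
  qed
  ultimately have "(\<forall>a<2. stochastic (S a)) \<and> M = (\<Sum>a<2. c a *\<^sub>R S a) \<and> (\<Sum>a<2. \<bar>c a\<bar>) = Gamma M"
    using PQ(1,2) by (simp add: S_def)
  then show "\<exists>m c (S::nat \<Rightarrow> real^'n^'n). (\<forall>a<m. stochastic (S a)) \<and> M = (\<Sum>a<m. c a *\<^sub>R S a)
            \<and> (\<Sum>a<m. \<bar>c a\<bar>) = Gamma M"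
    by blast
qed

end
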